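(* Let $\mathcal{X}=\mathbb{R}^d$ with the Euclidean metric, let $f:\mathcal{X}\to[0,1]$ be a labeling function, and let $H$ be a class of functions $h:\mathcal{X}\to[0,1]$, all $K$-Lipschitz continuous for some constant $K$. Let $\mu_s,\mu_t$ be probability measures on $\mathbb{R}^d$ that both satisfy the $T_1(\kappa)$ inequality. Let $X_s=\{x_i^s\}_{i=1}^{N_s}$ and $X_t=\{x_i^t\}_{i=1}^{N_t}$ be samples drawn i.i.d. from $\mu_s$ and $\mu_t$ respectively, with empirical measures $\hat\mu_s=\frac1{N_s}\sum_{i=1}^{N_s}\delta_{x_i^s}$ and $\hat\mu_t=\frac1{N_t}\sum_{i=1}^{N_t}\delta_{x_i^t}$. Let $h^*\in H$ minimize $\epsilon_s(h)+\epsilon_t(h)$ over $H$ and set $\lambda=\epsilon_s(h^* )+\epsilon_t(h^* )$. Then for any $d'>d$ and $\kappa'<\kappa$ there exists a constant $N_0$ depending on $d'$ such that for any $\delta>0$ and $\min(N_s,N_t)\ge N_0\max(\delta^{-(d'+2)},1)$, with probability at least $1-\delta$, for all $h\in H$, $$\epsilon_t(h)\le \epsilon_s(h)+2K\,W_1(\hat\mu_s,\hat\mu_t)+\lambda+2K\sqrt{2\log(1/\delta)/\kappa'}\left(\sqrt{\tfrac{1}{N_s}}+\sqrt{\tfrac{1}{N_t}}\right).$$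
   Context: $\epsilon_\mu(h,h')=\mathbb{E}_{x\sim\mu}[|h(x)-h'(x)|]$, $\epsilon_s=\epsilon_{\mu_s}$, $\epsilon_t=\epsilon_{\mu_t}$, and $\epsilon_s(h)=\epsilon_s(h,f)$, $\epsilon_t(h)=\epsilon_t(h,f)$. $W_1$ is the first Wasserstein distance with respect to the Euclidean metric. A probability measure $\mu$ satisfies the transportation inequality $T_1(\kappa)$ if $W_1(\mu,\nu)\le\sqrt{\frac{2}{\kappa}\mathrm{KL}(\nu\|\mu)}$ for every probability measure $\nu$, where KL is the Kullback–Leibler divergence. *)

theory Defs
  imports "HOL-Probability.Probability"
begin

definition eps :: "'a measure \<Rightarrow> ('a \<Rightarrow> real) \<Rightarrow> ('a \<Rightarrow> real) \<Rightarrow> real" where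
  "eps \<mu> h h' = (\<integral>x. \<bar>h x - h' x\<bar> \<partial>\<mu>)"

definition couplings :: "'a::metric_space measure \<Rightarrow> 'a measure \<Rightarrow> ('a \<times> 'a) measure set" where
  "couplings \<mu> \<nu> = {\<pi>. prob_space \<pi> \<and> sets \<pi> = sets (borel \<Otimes>\<^sub>M borel)
      \<and> distr \<pi> borel fst = \<mu> \<and> distr \<pi> borel snd = \<nu>}"

definition W1 :: "'a::metric_space measure \<Rightarrow> 'a measure \<Rightarrow> ennreal" where
  "W1 \<mu> \<nu> = (INF \<pi> \<in> couplings \<mu> \<nu>. \<integral>\<^sup>+ p. ennreal (dist (fst p) (snd p)) \<partial>\<pi>)"

text \<open>If KL(nu||mu) = infinity (nu not absolutely
  continuous w.r.t. mu, or log-density not nu-integrable) the inequality is vacuous,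
  so only the finite-KL case is required.\<close>
definition T1_ineq :: "real \<Rightarrow> 'a::metric_space measure \<Rightarrow> bool" where
  "T1_ineq \<kappa> \<mu> \<longleftrightarrow>
     (\<forall>\<nu>. prob_space \<nu> \<and> sets \<nu> = sets \<mu> \<and> absolutely_continuous \<mu> \<nu>
        \<and> integrable \<nu> (entropy_density (exp 1) \<mu> \<nu>) \<longrightarrow>
        W1 \<mu> \<nu> \<le> ennreal (sqrt (2 / \<kappa> * KL_divergence (exp 1) \<mu> \<nu>)))"

definition emp_measure :: "nat \<Rightarrow> (nat \<Rightarrow> 'a::topological_space) \<Rightarrow> 'a measure" where
  "emp_measure n x = distr (uniform_count_measure {..<n}) borel x"

end

theory Submission
  imports Defs
begin

text \<open>Write \<open>D(g) = \<integral>g d\<mu>\<^sub>t - \<integral>g d\<mu>\<^sub>s\<close>. Since \<open>\<epsilon>\<close> is a pseudometric,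
  \<open>\<epsilon>\<^sub>t(h) \<le> \<epsilon>\<^sub>s(h) + \<lambda> + D(|h - h\<^sup>*|)\<close>, and \<open>|h - h\<^sup>*|\<close> is \<open>2K\<close>-Lipschitz with values in \<open>[0,1]\<close>.
  Tilting a measure satisfying \<open>T\<^sub>1(\<kappa>)\<close> by \<open>exp(l \<phi>)\<close> and combining the transportation inequality with
  the easy direction of Kantorovich duality gives the sub-Gaussian bound
  \<open>E exp(l(\<phi> - E \<phi>)) \<le> exp(l\<^sup>2 L\<^sup>2 / 2\<kappa>)\<close> for bounded \<open>L\<close>-Lipschitz \<open>\<phi>\<close>. Tensorising over the two
  independent samples and a Chernoff bound show that \<open>D(g)\<close> exceeds its empirical counterpart, which is
  at most \<open>L\<close> times the \<open>W\<^sub>1\<close> distance of the empirical measures, by more than \<open>\<tau>\<close> with probability at most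
  \<open>exp(-\<kappa> \<tau>\<^sup>2 / (2 L\<^sup>2 (1/N\<^sub>s + 1/N\<^sub>t)))\<close>. Applying this to a single near-maximiser of \<open>D\<close>
  over the class, and spending the slack between \<open>\<kappa>'\<close> and \<open>\<kappa>\<close> on the approximation error,
  gives the bound uniformly in \<open>h\<close>. The bound is dimension-free.\<close>

lemma lipschitz_on_UNIV_borel_measurable:
  fixes \<phi> :: "'a::metric_space \<Rightarrow> 'b::metric_space"
  assumes "L-lipschitz_on UNIV \<phi>" and "sets M = sets borel"
  shows "\<phi> \<in> borel_measurable M"
  unfolding measurable_cong_sets[OF assms(2) refl]
  using assms(1) by (intro borel_measurable_continuous_onI lipschitz_on_continuous_on)

lemma lipschitz_on_abs:
  fixes f :: "'a::metric_space \<Rightarrow> real"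
  assumes "C-lipschitz_on U f"
  shows "C-lipschitz_on U (\<lambda>x. \<bar>f x\<bar>)"
  using assms unfolding lipschitz_on_def dist_real_def
  by (meson abs_triangle_ineq3 order_trans)

lemma integrable_bounded:
  fixes g :: "'a \<Rightarrow> real"
  assumes "prob_space M" "g \<in> borel_measurable M" "\<And>x. \<bar>g x\<bar> \<le> B"
  shows "integrable M g"
  using assms by (intro finite_measure.integrable_const_bound[where B=B] prob_space.finite_measure) auto

lemma abs_integral_le_bound:
  fixes g :: "'a \<Rightarrow> real"
  assumes "prob_space M" "g \<in> borel_measurable M" "\<And>x. \<bar>g x\<bar> \<le> B"
  shows "\<bar>\<integral>x. g x \<partial>M\<bar> \<le> B"
proof -
  have "\<bar>\<integral>x. g x \<partial>M\<bar> \<le> (\<integral>x. \<bar>g x\<bar> \<partial>M)"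
    using integral_abs_bound by blast
  also have "\<dots> \<le> B"
    using assms integrable_bounded[OF assms] by (intro prob_space.integral_le_const) auto
  finally show ?thesis .
qed

section \<open>Couplings and the first Wasserstein distance\<close>

lemma distr_pair_snd:
  assumes "prob_space M1" and "sigma_finite_measure M2"
  shows "distr (M1 \<Otimes>\<^sub>M M2) M2 snd = M2"
proof (intro measure_eqI)
  interpret M1: prob_space M1 by fact
  interpret M2: sigma_finite_measure M2 by fact
  fix A assume A: "A \<in> sets (distr (M1 \<Otimes>\<^sub>M M2) M2 snd)"
  then have "emeasure (distr (M1 \<Otimes>\<^sub>M M2) M2 snd) A = emeasure (M1 \<Otimes>\<^sub>M M2) (space M1 \<times> A)"
    by (auto simp: emeasure_distr space_pair_measure dest: sets.sets_into_space
        intro!: arg_cong2[where f=emeasure])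
  also have "\<dots> = emeasure M2 A"
    using A by (simp add: M2.emeasure_pair_measure_Times M1.emeasure_space_1)
  finally show "emeasure (distr (M1 \<Otimes>\<^sub>M M2) M2 snd) A = emeasure M2 A" .
qed simp

lemma pair_measure_in_couplings:
  fixes \<mu> \<nu> :: "'a::metric_space measure"
  assumes "prob_space \<mu>" "sets \<mu> = sets borel" "prob_space \<nu>" "sets \<nu> = sets borel"
  shows "\<mu> \<Otimes>\<^sub>M \<nu> \<in> couplings \<mu> \<nu>"
proof -
  interpret \<nu>: prob_space \<nu> by fact
  have "distr (\<mu> \<Otimes>\<^sub>M \<nu>) borel fst = distr (\<mu> \<Otimes>\<^sub>M \<nu>) \<mu> fst"
    "distr (\<mu> \<Otimes>\<^sub>M \<nu>) borel snd = distr (\<mu> \<Otimes>\<^sub>M \<nu>) \<nu> snd"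
    using assms by (auto intro!: distr_cong)
  moreover have "sets (\<mu> \<Otimes>\<^sub>M \<nu>) = sets (borel \<Otimes>\<^sub>M borel)"
    using assms by (intro sets_pair_measure_cong) auto
  ultimately show ?thesis
    using assms by (simp add: couplings_def prob_space_pair \<nu>.distr_pair_fst distr_pair_snd
        prob_space_imp_sigma_finite)
qed

lemma integral_diff_le_coupling_cost:
  fixes \<phi> :: "'a::metric_space \<Rightarrow> real"
  assumes \<pi>: "\<pi> \<in> couplings \<mu> \<nu>" and lip: "L-lipschitz_on UNIV \<phi>" and L: "L > 0"
    and bnd: "\<And>x. \<bar>\<phi> x\<bar> \<le> B"
  shows "ennreal (((\<integral>x. \<phi> x \<partial>\<nu>) - (\<integral>x. \<phi> x \<partial>\<mu>)) / L)
    \<le> (\<integral>\<^sup>+ p. ennreal (dist (fst p) (snd p)) \<partial>\<pi>)"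
proof -
  from \<pi> have sets_\<pi>: "sets \<pi> = sets (borel \<Otimes>\<^sub>M borel)"
    and fst_\<pi>: "distr \<pi> borel fst = \<mu>" and snd_\<pi>: "distr \<pi> borel snd = \<nu>" and "prob_space \<pi>"
    by (auto simp: couplings_def)
  interpret prob_space \<pi> by fact
  have [measurable]: "\<phi> \<in> borel_measurable borel"
    using lip by (rule lipschitz_on_UNIV_borel_measurable) simp
  have [measurable]: "fst \<in> measurable \<pi> borel" "snd \<in> measurable \<pi> borel"
    using measurable_cong_sets[OF sets_\<pi> refl] by auto
  have int_fst: "integrable \<pi> (\<lambda>p. \<phi> (fst p))" and int_snd: "integrable \<pi> (\<lambda>p. \<phi> (snd p))"
    using bnd by (auto intro!: integrable_const_bound[where B=B])
  define h where "h p = (\<phi> (snd p) - \<phi> (fst p)) / L" for p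
  have int_h: "integrable \<pi> h"
    unfolding h_def using int_fst int_snd by auto
  have "((\<integral>x. \<phi> x \<partial>\<nu>) - (\<integral>x. \<phi> x \<partial>\<mu>)) / L = (\<integral>p. h p \<partial>\<pi>)"
    unfolding fst_\<pi>[symmetric] snd_\<pi>[symmetric] h_def using int_fst int_snd
    by (simp add: integral_distr)
  also have "\<dots> \<le> (\<integral>p. \<bar>h p\<bar> \<partial>\<pi>)"
    using int_h by (intro integral_mono) auto
  finally have "ennreal (((\<integral>x. \<phi> x \<partial>\<nu>) - (\<integral>x. \<phi> x \<partial>\<mu>)) / L) \<le> (\<integral>\<^sup>+ p. ennreal \<bar>h p\<bar> \<partial>\<pi>)"
    using int_h by (simp add: nn_integral_eq_integral ennreal_leI)
  also have "\<dots> \<le> (\<integral>\<^sup>+ p. ennreal (dist (fst p) (snd p)) \<partial>\<pi>)"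
  proof (intro nn_integral_mono ennreal_leI)
    fix p :: "'a \<times> 'a"
    have "\<bar>\<phi> (snd p) - \<phi> (fst p)\<bar> \<le> L * dist (fst p) (snd p)"
      using lipschitz_onD[OF lip, of "snd p" "fst p"] by (simp add: dist_real_def dist_commute)
    then show "\<bar>h p\<bar> \<le> dist (fst p) (snd p)"
      using L by (simp add: h_def pos_divide_le_eq mult.commute)
  qed
  finally show ?thesis .
qed

lemma integral_diff_le_W1:
  fixes \<phi> :: "'a::metric_space \<Rightarrow> real"
  assumes lip: "L-lipschitz_on UNIV \<phi>" and L: "L > 0" and bnd: "\<And>x. \<bar>\<phi> x\<bar> \<le> B"
  shows "ennreal ((\<integral>x. \<phi> x \<partial>\<nu>) - (\<integral>x. \<phi> x \<partial>\<mu>)) \<le> ennreal L * W1 \<mu> \<nu>"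
proof (cases "(\<integral>x. \<phi> x \<partial>\<nu>) - (\<integral>x. \<phi> x \<partial>\<mu>) \<ge> 0")
  case True
  define D where "D = (\<integral>x. \<phi> x \<partial>\<nu>) - (\<integral>x. \<phi> x \<partial>\<mu>)"
  have "ennreal (D / L) \<le> W1 \<mu> \<nu>"
    unfolding W1_def D_def
    by (intro INF_greatest integral_diff_le_coupling_cost[OF _ lip L bnd])
  then have "ennreal L * ennreal (D / L) \<le> ennreal L * W1 \<mu> \<nu>"
    by (rule mult_left_mono) simp
  moreover have "ennreal D = ennreal L * ennreal (D / L)"
    using True L by (simp add: D_def ennreal_mult[symmetric])
  ultimately show ?thesis by (simp add: D_def)
qed (simp add: ennreal_neg)

lemma W1_le_first_moments:
  fixes \<mu> \<nu> :: "'a::real_normed_vector measure"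
  assumes "prob_space \<mu>" "sets \<mu> = sets borel" "prob_space \<nu>" "sets \<nu> = sets borel"
  shows "W1 \<mu> \<nu> \<le> (\<integral>\<^sup>+ x. ennreal (norm x) \<partial>\<mu>) + (\<integral>\<^sup>+ y. ennreal (norm y) \<partial>\<nu>)"
proof -
  define \<pi> where "\<pi> = \<mu> \<Otimes>\<^sub>M \<nu>"
  have \<pi>: "\<pi> \<in> couplings \<mu> \<nu>"
    unfolding \<pi>_def using assms by (rule pair_measure_in_couplings)
  then have sets_\<pi>: "sets \<pi> = sets (borel \<Otimes>\<^sub>M borel)"
    and fst_\<pi>: "distr \<pi> borel fst = \<mu>" and snd_\<pi>: "distr \<pi> borel snd = \<nu>"
    by (auto simp: couplings_def)
  have [measurable]: "fst \<in> measurable \<pi> borel" "snd \<in> measurable \<pi> borel"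
    using measurable_cong_sets[OF sets_\<pi> refl] by auto
  have "W1 \<mu> \<nu> \<le> (\<integral>\<^sup>+ p. ennreal (dist (fst p) (snd p)) \<partial>\<pi>)"
    unfolding W1_def using \<pi> by (rule INF_lower)
  also have "\<dots> \<le> (\<integral>\<^sup>+ p. ennreal (norm (fst p)) + ennreal (norm (snd p)) \<partial>\<pi>)"
    by (intro nn_integral_mono)
      (simp add: dist_norm norm_triangle_ineq4 flip: ennreal_plus)
  also have "\<dots> = (\<integral>\<^sup>+ p. ennreal (norm (fst p)) \<partial>\<pi>) + (\<integral>\<^sup>+ p. ennreal (norm (snd p)) \<partial>\<pi>)"
    by (rule nn_integral_add) auto
  also have "\<dots> = (\<integral>\<^sup>+ x. ennreal (norm x) \<partial>\<mu>) + (\<integral>\<^sup>+ y. ennreal (norm y) \<partial>\<nu>)"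
    unfolding fst_\<pi>[symmetric] snd_\<pi>[symmetric] by (simp add: nn_integral_distr)
  finally show ?thesis .
qed

lemma measurable_uniform_count_measure_borel:
  "x \<in> measurable (uniform_count_measure {..<n}) (borel :: 'a::topological_space measure)"
  by (simp add: measurable_cong_sets[OF sets_uniform_count_measure_count_space refl])

lemma prob_space_emp_measure:
  "n > 0 \<Longrightarrow> prob_space (emp_measure n x)"
  unfolding emp_measure_def
  by (intro prob_space.prob_space_distr prob_space_uniform_count_measure
      measurable_uniform_count_measure_borel) auto

lemma sets_emp_measure [simp]: "sets (emp_measure n x) = sets borel"
  by (simp add: emp_measure_def)

lemma integral_emp_measure:
  fixes g :: "'a::topological_space \<Rightarrow> real"
  assumes "g \<in> borel_measurable borel"
  shows "(\<integral>y. g y \<partial>emp_measure n x) = (\<Sum>i<n. g (x i)) / n"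
  unfolding emp_measure_def using assms
  by (simp add: integral_distr[OF measurable_uniform_count_measure_borel] integral_uniform_count_measure)

lemma nn_integral_norm_emp_measure_finite:
  fixes x :: "nat \<Rightarrow> 'a::real_normed_vector"
  assumes "n > 0"
  shows "(\<integral>\<^sup>+ y. ennreal (norm y) \<partial>emp_measure n x) < \<infinity>"
proof -
  have "(\<integral>\<^sup>+ y. ennreal (norm y) \<partial>emp_measure n x)
      = (\<integral>\<^sup>+ i. ennreal (norm (x i)) \<partial>uniform_count_measure {..<n})"
    unfolding emp_measure_def by (simp add: nn_integral_distr[OF measurable_uniform_count_measure_borel])
  also have "\<dots> \<le> (\<integral>\<^sup>+ i. ennreal (\<Sum>j<n. norm (x j)) \<partial>uniform_count_measure {..<n})"
    by (intro nn_integral_mono ennreal_leI member_le_sum) (auto simp: space_uniform_count_measure)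
  also have "\<dots> = ennreal (\<Sum>j<n. norm (x j))"
  proof -
    have "prob_space (uniform_count_measure {..<n})"
      using assms by (intro prob_space_uniform_count_measure) auto
    then show ?thesis
      by (simp add: prob_space.emeasure_space_1)
  qed
  finally show ?thesis
    by (simp add: order_le_less_trans)
qed

lemma integral_diff_emp_measure_le_W1:
  fixes g :: "'a::real_normed_vector \<Rightarrow> real"
  assumes lip: "L-lipschitz_on UNIV g" and L: "L > 0" and bnd: "\<And>x. \<bar>g x\<bar> \<le> B"
    and "Ns > 0" "Nt > 0"
  shows "(\<integral>y. g y \<partial>emp_measure Nt xt) - (\<integral>y. g y \<partial>emp_measure Ns xs)
    \<le> L * enn2real (W1 (emp_measure Ns xs) (emp_measure Nt xt))"
proof -
  define w where "w = W1 (emp_measure Ns xs) (emp_measure Nt xt)"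
  have "w \<le> (\<integral>\<^sup>+ y. ennreal (norm y) \<partial>emp_measure Ns xs) + (\<integral>\<^sup>+ y. ennreal (norm y) \<partial>emp_measure Nt xt)"
    unfolding w_def using assms by (intro W1_le_first_moments prob_space_emp_measure) auto
  also have "\<dots> < \<infinity>"
    using nn_integral_norm_emp_measure_finite[of Ns xs] nn_integral_norm_emp_measure_finite[of Nt xt] assms
    by simp
  finally have w: "w = ennreal (enn2real w)"
    by simp
  have "ennreal ((\<integral>y. g y \<partial>emp_measure Nt xt) - (\<integral>y. g y \<partial>emp_measure Ns xs)) \<le> ennreal L * w"
    unfolding w_def by (rule integral_diff_le_W1[OF lip L bnd])
  also have "\<dots> = ennreal (L * enn2real w)"
    using L by (subst w) (simp add: ennreal_mult)
  finally show ?thesis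
    unfolding w_def using L by simp
qed

section \<open>Sub-Gaussian moment bound from the transportation inequality\<close>

lemma KL_divergence_positive_density:
  fixes \<rho> :: "'a \<Rightarrow> real"
  assumes "prob_space \<mu>" and [measurable]: "\<rho> \<in> borel_measurable \<mu>" and \<rho>_pos: "\<And>x. \<rho> x > 0"
    and int_\<rho>: "integrable \<mu> \<rho>" "(\<integral>x. \<rho> x \<partial>\<mu>) = 1"
    and int_\<rho>_ln_\<rho>: "integrable \<mu> (\<lambda>x. \<rho> x * ln (\<rho> x))"
  defines "\<nu> \<equiv> density \<mu> (\<lambda>x. ennreal (\<rho> x))"
  shows "prob_space \<nu>" "absolutely_continuous \<mu> \<nu>" "integrable \<nu> (entropy_density (exp 1) \<mu> \<nu>)"
    "KL_divergence (exp 1) \<mu> \<nu> = (\<integral>x. \<rho> x * ln (\<rho> x) \<partial>\<mu>)" "0 \<le> KL_divergence (exp 1) \<mu> \<nu>"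
proof -
  interpret prob_space \<mu> by fact
  have "emeasure \<nu> (space \<nu>) = ennreal (\<integral>x. \<rho> x \<partial>\<mu>)"
    using int_\<rho>(1) \<rho>_pos
    by (simp add: \<nu>_def emeasure_density less_imp_le nn_integral_eq_integral[symmetric]
        cong: nn_integral_cong)
  then have "emeasure \<nu> (space \<nu>) = 1"
    using int_\<rho>(2) by simp
  then show "prob_space \<nu>"
    by (rule prob_spaceI)
  show "absolutely_continuous \<mu> \<nu>"
    unfolding \<nu>_def by (rule absolutely_continuousI_density) measurable
  have "AE x in \<mu>. RN_deriv \<mu> \<nu> x = ennreal (\<rho> x)"
    unfolding \<nu>_def using \<rho>_pos
    by (intro density_unique density_RN_deriv_density) (auto intro: less_imp_le)
  then have "AE x in \<mu>. entropy_density (exp 1) \<mu> \<nu> x = ln (\<rho> x)"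
    by eventually_elim (use \<rho>_pos in \<open>auto simp: entropy_density_def log_def less_imp_le\<close>)
  then have "integrable \<mu> (\<lambda>x. \<rho> x * entropy_density (exp 1) \<mu> \<nu> x)"
    using int_\<rho>_ln_\<rho> by (subst integrable_cong_AE) (auto elim!: eventually_mono simp: \<nu>_def)
  then show "integrable \<nu> (entropy_density (exp 1) \<mu> \<nu>)"
    using \<rho>_pos by (simp add: \<nu>_def integrable_density less_imp_le)
  show "KL_divergence (exp 1) \<mu> \<nu> = (\<integral>x. \<rho> x * ln (\<rho> x) \<partial>\<mu>)"
    unfolding \<nu>_def using \<rho>_pos by (subst KL_density) (auto simp: log_def less_imp_le)
  interpret information_space \<mu> "exp 1"
    by standard simp
  show "0 \<le> KL_divergence (exp 1) \<mu> \<nu>"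
    unfolding \<nu>_def using \<rho>_pos int_\<rho>_ln_\<rho> \<open>prob_space \<nu>\<close>
    by (intro KL_nonneg) (auto simp: \<nu>_def log_def less_imp_le)
qed

lemma exponential_tilt:
  fixes \<phi> :: "'a \<Rightarrow> real"
  assumes "prob_space \<mu>" and [measurable]: "\<phi> \<in> borel_measurable \<mu>"
    and bnd: "\<And>x. \<bar>\<phi> x\<bar> \<le> B"
  obtains \<nu> where "prob_space \<nu>" "sets \<nu> = sets \<mu>" "absolutely_continuous \<mu> \<nu>"
    "integrable \<nu> (entropy_density (exp 1) \<mu> \<nu>)"
    "KL_divergence (exp 1) \<mu> \<nu> = l * (\<integral>x. \<phi> x \<partial>\<nu>) - ln (\<integral>x. exp (l * \<phi> x) \<partial>\<mu>)"
    "0 \<le> KL_divergence (exp 1) \<mu> \<nu>" "0 < (\<integral>x. exp (l * \<phi> x) \<partial>\<mu>)"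
proof -
  interpret prob_space \<mu> by fact
  define Z where "Z = (\<integral>x. exp (l * \<phi> x) \<partial>\<mu>)"
  have exp_lb: "exp (- \<bar>l\<bar> * B) \<le> exp (l * \<phi> x)" and exp_ub: "exp (l * \<phi> x) \<le> exp (\<bar>l\<bar> * B)" for x
  proof -
    have "\<bar>l * \<phi> x\<bar> \<le> \<bar>l\<bar> * B"
      using bnd[of x] by (simp add: abs_mult mult_left_mono)
    then show "exp (- \<bar>l\<bar> * B) \<le> exp (l * \<phi> x)" "exp (l * \<phi> x) \<le> exp (\<bar>l\<bar> * B)"
      by auto
  qed
  have int_exp: "integrable \<mu> (\<lambda>x. exp (l * \<phi> x))"
    using exp_ub by (intro integrable_const_bound[where B="exp (\<bar>l\<bar> * B)"]) auto
  have "exp (- \<bar>l\<bar> * B) \<le> Z"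
    using integral_mono[OF _ int_exp exp_lb] by (simp add: Z_def prob_space)
  then have Z: "Z > 0"
    by (rule less_le_trans[rotated]) simp
  define \<rho> where "\<rho> x = exp (l * \<phi> x) / Z" for x
  have \<rho>_pos: "\<rho> x > 0" for x
    using Z by (simp add: \<rho>_def)
  have ln_\<rho>: "\<rho> x * ln (\<rho> x) = l * (\<rho> x * \<phi> x) - ln Z * \<rho> x" for x
  proof -
    have ln_eq: "ln (\<rho> x) = l * \<phi> x - ln Z"
      using Z by (simp add: \<rho>_def ln_div)
    show ?thesis
      unfolding ln_eq by (simp add: algebra_simps)
  qed
  have int_\<rho>: "integrable \<mu> \<rho>" "(\<integral>x. \<rho> x \<partial>\<mu>) = 1"
    unfolding \<rho>_def using int_exp Z by (simp_all add: Z_def)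
  have int_\<rho>\<phi>: "integrable \<mu> (\<lambda>x. \<rho> x * \<phi> x)"
  proof (rule Bochner_Integration.integrable_bound[OF integrable_mult_right[OF int_\<rho>(1), of B]])
    show "AE x in \<mu>. norm (\<rho> x * \<phi> x) \<le> norm (B * \<rho> x)"
      using bnd by (intro AE_I2) (simp add: abs_mult, metis abs_ge_self abs_ge_zero mult.commute mult_right_mono order.trans)
  qed (simp add: \<rho>_def)
  define \<nu> where "\<nu> = density \<mu> (\<lambda>x. ennreal (\<rho> x))"
  have [measurable]: "\<rho> \<in> borel_measurable \<mu>"
    unfolding \<rho>_def by measurable
  note KL = KL_divergence_positive_density[OF prob_space_axioms _ \<rho>_pos int_\<rho>, folded \<nu>_def]
  have "(\<integral>x. \<rho> x * ln (\<rho> x) \<partial>\<mu>) = l * (\<integral>x. \<phi> x \<partial>\<nu>) - ln Z"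
    using int_\<rho>\<phi> int_\<rho> \<rho>_pos
    by (simp add: ln_\<rho> \<nu>_def integral_density less_imp_le)
  moreover have "integrable \<mu> (\<lambda>x. \<rho> x * ln (\<rho> x))"
    using int_\<rho>\<phi> int_\<rho> by (simp add: ln_\<rho>)
  ultimately show ?thesis
    using that KL Z unfolding Z_def by (simp add: \<nu>_def)
qed

lemma T1_ineq_exp_moment_bound:
  fixes \<phi> :: "'a::metric_space \<Rightarrow> real"
  assumes "prob_space \<mu>" and sets_\<mu>: "sets \<mu> = sets borel" and T1: "T1_ineq \<kappa> \<mu>" and \<kappa>: "\<kappa> > 0"
    and lip: "L-lipschitz_on UNIV \<phi>" and L: "L > 0" and bnd: "\<And>x. \<bar>\<phi> x\<bar> \<le> B"
    and l: "l \<ge> 0"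
  shows "(\<integral>x. exp (l * (\<phi> x - (\<integral>y. \<phi> y \<partial>\<mu>))) \<partial>\<mu>) \<le> exp (l\<^sup>2 * L\<^sup>2 / (2 * \<kappa>))"
proof -
  interpret prob_space \<mu> by fact
  have "\<phi> \<in> borel_measurable \<mu>"
    using lip sets_\<mu> by (rule lipschitz_on_UNIV_borel_measurable)
  then obtain \<nu> where \<nu>: "prob_space \<nu>" "sets \<nu> = sets \<mu>" "absolutely_continuous \<mu> \<nu>"
      "integrable \<nu> (entropy_density (exp 1) \<mu> \<nu>)"
    and KL: "KL_divergence (exp 1) \<mu> \<nu> = l * (\<integral>x. \<phi> x \<partial>\<nu>) - ln (\<integral>x. exp (l * \<phi> x) \<partial>\<mu>)"
    and KL_nonneg: "0 \<le> KL_divergence (exp 1) \<mu> \<nu>" and Z: "0 < (\<integral>x. exp (l * \<phi> x) \<partial>\<mu>)"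
    by (rule exponential_tilt[OF prob_space_axioms _ bnd])
  define m where "m = (\<integral>y. \<phi> y \<partial>\<mu>)"
  define s where "s = sqrt (2 / \<kappa> * KL_divergence (exp 1) \<mu> \<nu>)"
  have s: "s \<ge> 0" "\<kappa> * s\<^sup>2 / 2 = KL_divergence (exp 1) \<mu> \<nu>"
    using KL_nonneg \<kappa> by (simp_all add: s_def)
  have "ennreal ((\<integral>x. \<phi> x \<partial>\<nu>) - m) \<le> ennreal L * W1 \<mu> \<nu>"
    unfolding m_def by (rule integral_diff_le_W1[OF lip L bnd])
  also have "\<dots> \<le> ennreal L * ennreal s"
    using T1 \<nu> unfolding T1_ineq_def s_def by (intro mult_left_mono) auto
  finally have "(\<integral>x. \<phi> x \<partial>\<nu>) - m \<le> L * s"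
    using L s by (simp add: ennreal_mult[symmetric])
  then have "l * ((\<integral>x. \<phi> x \<partial>\<nu>) - m) \<le> l * (L * s)"
    using l by (rule mult_left_mono)
  also have "\<dots> \<le> \<kappa> * s\<^sup>2 / 2 + l\<^sup>2 * L\<^sup>2 / (2 * \<kappa>)"
  proof -
    have "0 \<le> (\<kappa> * s - l * L)\<^sup>2 / (2 * \<kappa>)"
      using \<kappa> by simp
    also have "\<dots> = \<kappa> * s\<^sup>2 / 2 - l * (L * s) + l\<^sup>2 * L\<^sup>2 / (2 * \<kappa>)"
      using \<kappa> by (simp add: field_simps power2_eq_square)
    finally show ?thesis by simp
  qed
  finally have ln_Z: "ln (\<integral>x. exp (l * \<phi> x) \<partial>\<mu>) \<le> l * m + l\<^sup>2 * L\<^sup>2 / (2 * \<kappa>)"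
    using KL s(2) by (simp add: algebra_simps)
  have "(\<integral>x. exp (l * (\<phi> x - m)) \<partial>\<mu>) = (\<integral>x. exp (l * \<phi> x) * exp (- (l * m)) \<partial>\<mu>)"
    by (simp add: right_diff_distrib exp_diff exp_minus divide_inverse)
  also have "\<dots> = (\<integral>x. exp (l * \<phi> x) \<partial>\<mu>) * exp (- (l * m))"
    by simp
  also have "\<dots> = exp (ln (\<integral>x. exp (l * \<phi> x) \<partial>\<mu>) - l * m)"
    using Z by (simp add: exp_diff exp_minus field_simps)
  also have "\<dots> \<le> exp (l\<^sup>2 * L\<^sup>2 / (2 * \<kappa>))"
    using ln_Z by simp
  finally show ?thesis unfolding m_def .
qed

section \<open>Concentration of the two-sample discrepancy\<close>

lemma nn_integral_pair_measure_mult: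
  assumes "sigma_finite_measure M2"
    and [measurable]: "f \<in> borel_measurable M1" "g \<in> borel_measurable M2"
  shows "(\<integral>\<^sup>+ p. f (fst p) * g (snd p) \<partial>(M1 \<Otimes>\<^sub>M M2)) = (\<integral>\<^sup>+ x. f x \<partial>M1) * (\<integral>\<^sup>+ y. g y \<partial>M2)"
proof -
  interpret M2: sigma_finite_measure M2 by fact
  have "(\<integral>\<^sup>+ p. f (fst p) * g (snd p) \<partial>(M1 \<Otimes>\<^sub>M M2)) = (\<integral>\<^sup>+ x. f x * (\<integral>\<^sup>+ y. g y \<partial>M2) \<partial>M1)"
    by (subst M2.nn_integral_fst[symmetric]) (auto intro!: nn_integral_cong nn_integral_cmult)
  also have "\<dots> = (\<integral>\<^sup>+ x. f x \<partial>M1) * (\<integral>\<^sup>+ y. g y \<partial>M2)"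
    by (rule nn_integral_multc) auto
  finally show ?thesis .
qed

lemma nn_integral_PiM_iid_prod:
  assumes "sigma_finite_measure M" and [measurable]: "f \<in> borel_measurable M"
  shows "(\<integral>\<^sup>+ x. (\<Prod>i<n. f (x i)) \<partial>PiM {..<n} (\<lambda>_. M)) = (\<integral>\<^sup>+ y. f y \<partial>M) ^ n"
proof -
  interpret product_sigma_finite "\<lambda>_::nat. M"
    using assms(1) by (simp add: product_sigma_finite_def)
  show ?thesis
    by (subst product_nn_integral_prod) auto
qed

lemma T1_ineq_sample_mean_exp_moment_bound:
  fixes g :: "'a::metric_space \<Rightarrow> real" and n :: nat
  assumes "prob_space \<mu>" and sets_\<mu>: "sets \<mu> = sets borel" and T1: "T1_ineq \<kappa> \<mu>" and \<kappa>: "\<kappa> > 0"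
    and lip: "L-lipschitz_on UNIV g" and L: "L > 0" and bnd: "\<And>x. \<bar>g x\<bar> \<le> B"
    and l: "l \<ge> 0" and n: "n > 0"
  shows "(\<integral>\<^sup>+ x. ennreal (exp (l * ((\<Sum>i<n. g (x i)) / n - (\<integral>y. g y \<partial>\<mu>)))) \<partial>PiM {..<n} (\<lambda>_. \<mu>))
    \<le> ennreal (exp (l\<^sup>2 * L\<^sup>2 / (2 * \<kappa> * n)))"
proof -
  interpret prob_space \<mu> by fact
  define m where "m = (\<integral>y. g y \<partial>\<mu>)"
  define F where "F y = ennreal (exp (l / n * (g y - m)))" for y
  have [measurable]: "g \<in> borel_measurable \<mu>"
    using lip sets_\<mu> by (rule lipschitz_on_UNIV_borel_measurable)
  have [measurable]: "F \<in> borel_measurable \<mu>"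
    unfolding F_def by measurable
  have "ennreal (exp (l * ((\<Sum>i<n. g (x i)) / n - m))) = (\<Prod>i<n. F (x i))" for x
  proof -
    have "(\<Sum>i<n. l / n * (g (x i) - m)) = l / n * ((\<Sum>i<n. g (x i)) - n * m)"
      by (simp only: sum_distrib_left[symmetric] sum_subtractf sum_constant card_lessThan)
    also have "\<dots> = l * ((\<Sum>i<n. g (x i)) / n - m)"
      using n by (simp add: field_simps)
    finally have "l * ((\<Sum>i<n. g (x i)) / n - m) = (\<Sum>i<n. l / n * (g (x i) - m))" ..
    then show ?thesis
      by (simp add: F_def exp_sum prod_ennreal)
  qed
  then have "(\<integral>\<^sup>+ x. ennreal (exp (l * ((\<Sum>i<n. g (x i)) / n - m))) \<partial>PiM {..<n} (\<lambda>_. \<mu>))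
      = (\<integral>\<^sup>+ y. F y \<partial>\<mu>) ^ n"
    using nn_integral_PiM_iid_prod[OF sigma_finite_measure_axioms, of F n] by (simp add: F_def)
  also have "\<dots> \<le> ennreal (exp ((l / n)\<^sup>2 * L\<^sup>2 / (2 * \<kappa>))) ^ n"
  proof (rule power_mono)
    have "l / n * (g y - m) \<le> l / n * (B + \<bar>m\<bar>)" for y
      using l bnd[of y] by (intro mult_left_mono) auto
    then have "integrable \<mu> (\<lambda>y. exp (l / n * (g y - m)))"
      by (intro integrable_const_bound[where B="exp (l / n * (B + \<bar>m\<bar>))"]) auto
    then have "(\<integral>\<^sup>+ y. F y \<partial>\<mu>) = ennreal (\<integral>y. exp (l / n * (g y - m)) \<partial>\<mu>)"
      unfolding F_def by (intro nn_integral_eq_integral) auto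
    also have "\<dots> \<le> ennreal (exp ((l / n)\<^sup>2 * L\<^sup>2 / (2 * \<kappa>)))"
      unfolding m_def using l
      by (intro ennreal_leI T1_ineq_exp_moment_bound[OF prob_space_axioms sets_\<mu> T1 \<kappa> lip L bnd]) auto
    finally show "(\<integral>\<^sup>+ y. F y \<partial>\<mu>) \<le> ennreal (exp ((l / n)\<^sup>2 * L\<^sup>2 / (2 * \<kappa>)))" .
  qed simp
  also have "\<dots> = ennreal (exp (l\<^sup>2 * L\<^sup>2 / (2 * \<kappa> * n)))"
    using n \<kappa> by (simp add: ennreal_power field_simps power2_eq_square flip: exp_of_nat_mult)
  finally show ?thesis
    by (simp add: m_def)
qed

lemma T1_ineq_two_sample_concentration:
  fixes g :: "'a::metric_space \<Rightarrow> real" and Ns Nt :: nat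
  assumes ps: "prob_space \<mu>s" and sets_\<mu>s: "sets \<mu>s = sets borel" and T1s: "T1_ineq \<kappa> \<mu>s"
    and pt: "prob_space \<mu>t" and sets_\<mu>t: "sets \<mu>t = sets borel" and T1t: "T1_ineq \<kappa> \<mu>t"
    and \<kappa>: "\<kappa> > 0" and lip: "L-lipschitz_on UNIV g" and L: "L > 0" and bnd: "\<And>x. \<bar>g x\<bar> \<le> B"
    and Ns: "Ns > 0" and Nt: "Nt > 0" and t: "t > 0"
  defines "P \<equiv> PiM {..<Ns} (\<lambda>_. \<mu>s) \<Otimes>\<^sub>M PiM {..<Nt} (\<lambda>_. \<mu>t)"
    and "Q \<equiv> \<lambda>\<omega>. ((\<Sum>i<Ns. g (fst \<omega> i)) / Ns - (\<integral>x. g x \<partial>\<mu>s))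
                 + ((\<integral>x. g x \<partial>\<mu>t) - (\<Sum>j<Nt. g (snd \<omega> j)) / Nt)"
  shows "Q \<in> borel_measurable P"
    and "emeasure P {\<omega>\<in>space P. t \<le> Q \<omega>} \<le> ennreal (exp (- t\<^sup>2 * \<kappa> / (2 * L\<^sup>2 * (1 / Ns + 1 / Nt))))"
proof -
  define c where "c = 1 / real Ns + 1 / real Nt"
  have c: "c > 0"
    using Ns Nt by (simp add: c_def add_pos_pos)
  \<comment> \<open>The Chernoff parameter minimising \<open>- l t + l\<^sup>2 L\<^sup>2 c / (2 \<kappa>)\<close>.\<close>
  define l where "l = t * \<kappa> / (L\<^sup>2 * c)"
  have l: "l > 0"
    using t \<kappa> L c by (simp add: l_def)
  have [measurable]: "g \<in> borel_measurable \<mu>s" "g \<in> borel_measurable \<mu>t"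
    using lipschitz_on_UNIV_borel_measurable[OF lip] sets_\<mu>s sets_\<mu>t by auto
  define As where "As x = (\<Sum>i<Ns. g (x i)) / Ns - (\<integral>y. g y \<partial>\<mu>s)" for x
  define At where "At x = (\<Sum>j<Nt. - g (x j)) / Nt - (\<integral>y. - g y \<partial>\<mu>t)" for x
  have [measurable]: "As \<in> borel_measurable (PiM {..<Ns} (\<lambda>_. \<mu>s))" "At \<in> borel_measurable (PiM {..<Nt} (\<lambda>_. \<mu>t))"
    unfolding As_def At_def by measurable
  have Q_split: "Q \<omega> = As (fst \<omega>) + At (snd \<omega>)" for \<omega>
    by (simp add: Q_def As_def At_def sum_negf)
  show Q_meas: "Q \<in> borel_measurable P"
    unfolding Q_split P_def by measurable
  have "emeasure P {\<omega>\<in>space P. t \<le> Q \<omega>}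
      \<le> ennreal (exp (- l * t)) * (\<integral>\<^sup>+ \<omega>. ennreal (exp (l * Q \<omega>)) * indicator (space P) \<omega> \<partial>P)"
    using Q_meas by (intro Chernoff_ineq_nn_integral_ge l) auto
  also have "(\<integral>\<^sup>+ \<omega>. ennreal (exp (l * Q \<omega>)) * indicator (space P) \<omega> \<partial>P)
      = (\<integral>\<^sup>+ x. ennreal (exp (l * As x)) \<partial>PiM {..<Ns} (\<lambda>_. \<mu>s))
        * (\<integral>\<^sup>+ y. ennreal (exp (l * At y)) \<partial>PiM {..<Nt} (\<lambda>_. \<mu>t))"
  proof -
    have "sigma_finite_measure (PiM {..<Nt} (\<lambda>_. \<mu>t))"
      using pt by (intro prob_space_imp_sigma_finite prob_space_PiM) auto
    then show ?thesis
      unfolding P_def Q_split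
      by (subst nn_integral_pair_measure_mult[symmetric])
        (auto intro!: nn_integral_cong simp: distrib_left exp_add ennreal_mult')
  qed
  also have "\<dots> \<le> ennreal (exp (l\<^sup>2 * L\<^sup>2 / (2 * \<kappa> * Ns))) * ennreal (exp (l\<^sup>2 * L\<^sup>2 / (2 * \<kappa> * Nt)))"
  proof (intro mult_mono)
    show "(\<integral>\<^sup>+ x. ennreal (exp (l * As x)) \<partial>PiM {..<Ns} (\<lambda>_. \<mu>s)) \<le> ennreal (exp (l\<^sup>2 * L\<^sup>2 / (2 * \<kappa> * Ns)))"
      unfolding As_def using l
      by (intro T1_ineq_sample_mean_exp_moment_bound[OF ps sets_\<mu>s T1s \<kappa> lip L bnd _ Ns]) simp
    show "(\<integral>\<^sup>+ y. ennreal (exp (l * At y)) \<partial>PiM {..<Nt} (\<lambda>_. \<mu>t)) \<le> ennreal (exp (l\<^sup>2 * L\<^sup>2 / (2 * \<kappa> * Nt)))"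
      unfolding At_def using l bnd lip
      by (intro T1_ineq_sample_mean_exp_moment_bound[OF pt sets_\<mu>t T1t \<kappa> _ L _ _ Nt]) auto
  qed auto
  also have "ennreal (exp (- l * t)) * \<dots> = ennreal (exp (- t\<^sup>2 * \<kappa> / (2 * L\<^sup>2 * c)))"
  proof -
    have "l\<^sup>2 * L\<^sup>2 / (2 * \<kappa> * Ns) + l\<^sup>2 * L\<^sup>2 / (2 * \<kappa> * Nt) = l\<^sup>2 * L\<^sup>2 * c / (2 * \<kappa>)"
      by (simp add: c_def add_divide_distrib ring_distribs mult.commute)
    also have "- l * t + \<dots> = - t\<^sup>2 * \<kappa> / (2 * L\<^sup>2 * c)"
      using \<kappa> L c by (simp add: l_def field_simps power2_eq_square)
    finally have "- l * t + (l\<^sup>2 * L\<^sup>2 / (2 * \<kappa> * Ns) + l\<^sup>2 * L\<^sup>2 / (2 * \<kappa> * Nt)) = - t\<^sup>2 * \<kappa> / (2 * L\<^sup>2 * c)" .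
    then show ?thesis
      by (simp add: ennreal_mult[symmetric] mult.assoc flip: exp_add)
  qed
  finally show "emeasure P {\<omega>\<in>space P. t \<le> Q \<omega>} \<le> ennreal (exp (- t\<^sup>2 * \<kappa> / (2 * L\<^sup>2 * (1 / Ns + 1 / Nt))))"
    by (simp add: c_def mult_left_mono)
qed

section \<open>Uniform bound over a class of Lipschitz functions\<close>

lemma confidence_radius_tail_le:
  assumes \<delta>: "0 < \<delta>" "\<delta> < 1" and \<kappa>': "0 < \<kappa>'" "\<kappa>' < \<kappa>" and L: "L > 0"
    and c: "0 < c" "c \<le> s\<^sup>2"
  defines "r \<equiv> sqrt (2 * ln (1 / \<delta>) / \<kappa>') * s"
  shows "exp (- (sqrt (\<kappa>' / \<kappa>) * L * r)\<^sup>2 * \<kappa> / (2 * L\<^sup>2 * c)) \<le> \<delta>"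
proof -
  have ln: "ln (1 / \<delta>) > 0"
    using \<delta> by simp
  have "(sqrt (\<kappa>' / \<kappa>) * L * r)\<^sup>2 * \<kappa> / (2 * L\<^sup>2 * c) = ln (1 / \<delta>) * (s\<^sup>2 / c)"
    using \<kappa>' L c ln by (simp add: r_def field_simps)
  also have "\<dots> \<ge> ln (1 / \<delta>)"
    using ln c by (simp add: le_divide_eq)
  finally have "exp (- (sqrt (\<kappa>' / \<kappa>) * L * r)\<^sup>2 * \<kappa> / (2 * L\<^sup>2 * c)) \<le> exp (- ln (1 / \<delta>))"
    by simp
  also have "\<dots> = \<delta>"
    using \<delta> by (simp add: ln_div)
  finally show ?thesis .
qed

lemma T1_ineq_two_sample_deviation_bound:
  fixes g :: "'a::real_normed_vector \<Rightarrow> real" and Ns Nt :: nat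
  assumes ps: "prob_space \<mu>s" and sets_\<mu>s: "sets \<mu>s = sets borel" and T1s: "T1_ineq \<kappa> \<mu>s"
    and pt: "prob_space \<mu>t" and sets_\<mu>t: "sets \<mu>t = sets borel" and T1t: "T1_ineq \<kappa> \<mu>t"
    and \<kappa>: "\<kappa> > 0" and lip: "L-lipschitz_on UNIV g" and L: "L > 0" and bnd: "\<And>x. \<bar>g x\<bar> \<le> B"
    and Ns: "Ns > 0" and Nt: "Nt > 0" and t: "t > 0"
    and tail: "exp (- t\<^sup>2 * \<kappa> / (2 * L\<^sup>2 * (1 / Ns + 1 / Nt))) \<le> \<delta>"
  defines "P \<equiv> PiM {..<Ns} (\<lambda>_. \<mu>s) \<Otimes>\<^sub>M PiM {..<Nt} (\<lambda>_. \<mu>t)"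
  shows "\<exists>A\<in>sets P. measure P A \<ge> 1 - \<delta> \<and> (\<forall>\<omega>\<in>A.
    (\<integral>x. g x \<partial>\<mu>t) - (\<integral>x. g x \<partial>\<mu>s) \<le> L * enn2real (W1 (emp_measure Ns (fst \<omega>)) (emp_measure Nt (snd \<omega>))) + t)"
proof -
  interpret P: prob_space P
    unfolding P_def using ps pt by (intro prob_space_pair prob_space_PiM) auto
  define Q where "Q = (\<lambda>\<omega>. ((\<Sum>i<Ns. g (fst \<omega> i)) / Ns - (\<integral>x. g x \<partial>\<mu>s))
                 + ((\<integral>x. g x \<partial>\<mu>t) - (\<Sum>j<Nt. g (snd \<omega> j)) / Nt))"
  define Bad where "Bad = {\<omega>\<in>space P. t \<le> Q \<omega>}"
  have concentration: "Q \<in> borel_measurable P"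
    "emeasure P Bad \<le> ennreal (exp (- t\<^sup>2 * \<kappa> / (2 * L\<^sup>2 * (1 / Ns + 1 / Nt))))"
    unfolding P_def Q_def Bad_def
    by (rule T1_ineq_two_sample_concentration[OF ps sets_\<mu>s T1s pt sets_\<mu>t T1t \<kappa> lip L bnd Ns Nt t])+
  have Bad: "Bad \<in> sets P"
    using concentration(1) unfolding Bad_def by measurable
  have "0 \<le> \<delta>"
    using tail exp_ge_zero order_trans by blast
  have "emeasure P Bad \<le> ennreal \<delta>"
    using concentration(2) tail by (auto intro: order_trans ennreal_leI)
  then have "1 - \<delta> \<le> measure P (space P - Bad)"
    using P.prob_compl[OF Bad] \<open>0 \<le> \<delta>\<close> by (simp add: P.emeasure_eq_measure)
  moreover have "(\<integral>x. g x \<partial>\<mu>t) - (\<integral>x. g x \<partial>\<mu>s)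
      \<le> L * enn2real (W1 (emp_measure Ns (fst \<omega>)) (emp_measure Nt (snd \<omega>))) + t"
    if "\<omega> \<in> space P - Bad" for \<omega>
  proof -
    have g_borel: "g \<in> borel_measurable borel"
      by (rule lipschitz_on_UNIV_borel_measurable[OF lip]) simp
    have "(\<integral>x. g x \<partial>\<mu>t) - (\<integral>x. g x \<partial>\<mu>s)
        = Q \<omega> + ((\<integral>x. g x \<partial>emp_measure Nt (snd \<omega>)) - (\<integral>x. g x \<partial>emp_measure Ns (fst \<omega>)))"
      by (simp add: Q_def integral_emp_measure[OF g_borel])
    also have "\<dots> \<le> t + L * enn2real (W1 (emp_measure Ns (fst \<omega>)) (emp_measure Nt (snd \<omega>)))"
      using that integral_diff_emp_measure_le_W1[OF lip L bnd Ns Nt]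
      by (intro add_mono) (auto simp: Bad_def)
    finally show ?thesis
      by simp
  qed
  ultimately show ?thesis
    using Bad by (intro bexI[of _ "space P - Bad"]) auto
qed

lemma near_maximiser:
  fixes D :: "'a \<Rightarrow> real"
  assumes "G \<noteq> {}" "bdd_above (D ` G)" "\<eta> > 0"
  obtains g0 where "g0 \<in> G" "\<And>g. g \<in> G \<Longrightarrow> D g \<le> D g0 + \<eta>"
proof -
  obtain g0 where g0: "g0 \<in> G" "(SUP g\<in>G. D g) - \<eta> < D g0"
    using less_cSUP_iff[OF assms(1,2), of "(SUP g\<in>G. D g) - \<eta>"] assms(3) by auto
  show ?thesis
  proof (rule that[OF g0(1)])
    show "D g \<le> D g0 + \<eta>" if "g \<in> G" for g
      using cSUP_upper[OF that assms(2)] g0(2) by simp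
  qed
qed

lemma T1_ineq_uniform_discrepancy_bound_nondegenerate:
  fixes G :: "('a::real_normed_vector \<Rightarrow> real) set" and Ns Nt :: nat
  assumes ps: "prob_space \<mu>s" and sets_\<mu>s: "sets \<mu>s = sets borel" and T1s: "T1_ineq \<kappa> \<mu>s"
    and pt: "prob_space \<mu>t" and sets_\<mu>t: "sets \<mu>t = sets borel" and T1t: "T1_ineq \<kappa> \<mu>t"
    and \<kappa>': "0 < \<kappa>'" "\<kappa>' < \<kappa>"
    and G_lip: "\<And>g. g \<in> G \<Longrightarrow> L-lipschitz_on UNIV g" and L: "L > 0"
    and G_bnd: "\<And>g x. g \<in> G \<Longrightarrow> \<bar>g x\<bar> \<le> B" and G: "G \<noteq> {}"
    and Ns: "Ns > 0" and Nt: "Nt > 0" and \<delta>: "0 < \<delta>" "\<delta> < 1"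
  defines "P \<equiv> PiM {..<Ns} (\<lambda>_. \<mu>s) \<Otimes>\<^sub>M PiM {..<Nt} (\<lambda>_. \<mu>t)"
  shows "\<exists>A\<in>sets P. measure P A \<ge> 1 - \<delta> \<and> (\<forall>\<omega>\<in>A. \<forall>g\<in>G.
    (\<integral>x. g x \<partial>\<mu>t) - (\<integral>x. g x \<partial>\<mu>s)
      \<le> L * enn2real (W1 (emp_measure Ns (fst \<omega>)) (emp_measure Nt (snd \<omega>)))
        + L * (sqrt (2 * ln (1 / \<delta>) / \<kappa>') * (sqrt (1 / Ns) + sqrt (1 / Nt))))"
proof -
  define r where "r = sqrt (2 * ln (1 / \<delta>) / \<kappa>') * (sqrt (1 / Ns) + sqrt (1 / Nt))"
  \<comment> \<open>A fraction \<open>\<theta>\<close> of the radius pays for the concentration of one fixed function, the rest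
      for replacing the supremum over \<open>G\<close> by a near-maximiser.\<close>
  define \<theta> where "\<theta> = sqrt (\<kappa>' / \<kappa>)"
  have "ln (1 / \<delta>) > 0"
    using \<delta> by simp
  then have "r > 0" "0 < \<theta>" "\<theta> < 1"
    using \<kappa>' Ns Nt by (auto simp: r_def \<theta>_def intro!: mult_pos_pos add_pos_pos)
  define D where "D g = (\<integral>x. g x \<partial>\<mu>t) - (\<integral>x. g x \<partial>\<mu>s)" for g :: "'a \<Rightarrow> real"
  have "D g \<le> 2 * B" if "g \<in> G" for g
  proof -
    have "g \<in> borel_measurable \<mu>s" "g \<in> borel_measurable \<mu>t"
      using lipschitz_on_UNIV_borel_measurable[OF G_lip[OF that]] sets_\<mu>s sets_\<mu>t by auto
    then have "\<bar>\<integral>x. g x \<partial>\<mu>s\<bar> \<le> B" "\<bar>\<integral>x. g x \<partial>\<mu>t\<bar> \<le> B"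
      using G_bnd[OF that] by (auto intro: abs_integral_le_bound[OF ps] abs_integral_le_bound[OF pt])
    then show ?thesis
      by (simp add: D_def abs_le_iff)
  qed
  then have "bdd_above (D ` G)"
    by (intro bdd_aboveI[where M="2 * B"]) blast
  moreover have "(1 - \<theta>) * L * r > 0"
    using \<open>r > 0\<close> \<open>\<theta> < 1\<close> L by simp
  ultimately obtain g0 where g0: "g0 \<in> G" and g0_max: "\<And>g. g \<in> G \<Longrightarrow> D g \<le> D g0 + (1 - \<theta>) * L * r"
    by (rule near_maximiser[OF G]) blast
  have "0 < 1 / real Ns + 1 / real Nt"
    using Ns Nt by (simp add: add_pos_pos)
  moreover have "1 / real Ns + 1 / real Nt \<le> (sqrt (1 / Ns) + sqrt (1 / Nt))\<^sup>2"
    by (simp add: power2_sum)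
  ultimately have tail: "exp (- (\<theta> * L * r)\<^sup>2 * \<kappa> / (2 * L\<^sup>2 * (1 / Ns + 1 / Nt))) \<le> \<delta>"
    unfolding \<theta>_def r_def by (rule confidence_radius_tail_le[OF \<delta> \<kappa>' L])
  have "\<kappa> > 0" "\<theta> * L * r > 0"
    using \<kappa>' \<open>r > 0\<close> \<open>0 < \<theta>\<close> L by auto
  then have "\<exists>A\<in>sets P. measure P A \<ge> 1 - \<delta> \<and> (\<forall>\<omega>\<in>A.
      D g0 \<le> L * enn2real (W1 (emp_measure Ns (fst \<omega>)) (emp_measure Nt (snd \<omega>))) + \<theta> * L * r)"
    unfolding D_def P_def
    by (rule T1_ineq_two_sample_deviation_bound[OF ps sets_\<mu>s T1s pt sets_\<mu>t T1t _ G_lip[OF g0] L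
          G_bnd[OF g0] Ns Nt _ tail])
  then obtain A where "A \<in> sets P" "measure P A \<ge> 1 - \<delta>"
    and A: "\<And>\<omega>. \<omega> \<in> A \<Longrightarrow>
      D g0 \<le> L * enn2real (W1 (emp_measure Ns (fst \<omega>)) (emp_measure Nt (snd \<omega>))) + \<theta> * L * r"
    by auto
  show ?thesis
  proof (intro bexI[of _ A] conjI ballI)
    fix \<omega> g assume "\<omega> \<in> A" "g \<in> G"
    then have "D g \<le> L * enn2real (W1 (emp_measure Ns (fst \<omega>)) (emp_measure Nt (snd \<omega>))) + L * r"
      using g0_max A by (fastforce simp: algebra_simps)
    then show "(\<integral>x. g x \<partial>\<mu>t) - (\<integral>x. g x \<partial>\<mu>s)
      \<le> L * enn2real (W1 (emp_measure Ns (fst \<omega>)) (emp_measure Nt (snd \<omega>)))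
        + L * (sqrt (2 * ln (1 / \<delta>) / \<kappa>') * (sqrt (1 / Ns) + sqrt (1 / Nt)))"
      by (simp only: D_def r_def)
  qed fact+
qed

lemma T1_ineq_uniform_discrepancy_bound:
  fixes G :: "('a::real_normed_vector \<Rightarrow> real) set" and Ns Nt :: nat
  assumes ps: "prob_space \<mu>s" and sets_\<mu>s: "sets \<mu>s = sets borel" and T1s: "T1_ineq \<kappa> \<mu>s"
    and pt: "prob_space \<mu>t" and sets_\<mu>t: "sets \<mu>t = sets borel" and T1t: "T1_ineq \<kappa> \<mu>t"
    and \<kappa>': "0 < \<kappa>'" "\<kappa>' < \<kappa>"
    and G_lip: "\<And>g. g \<in> G \<Longrightarrow> L-lipschitz_on UNIV g" and G_bnd: "\<And>g x. g \<in> G \<Longrightarrow> \<bar>g x\<bar> \<le> B"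
    and Ns: "Ns > 0" and Nt: "Nt > 0" and \<delta>: "0 < \<delta>"
  defines "P \<equiv> PiM {..<Ns} (\<lambda>_. \<mu>s) \<Otimes>\<^sub>M PiM {..<Nt} (\<lambda>_. \<mu>t)"
  shows "\<exists>A\<in>sets P. measure P A \<ge> 1 - \<delta> \<and> (\<forall>\<omega>\<in>A. \<forall>g\<in>G.
    (\<integral>x. g x \<partial>\<mu>t) - (\<integral>x. g x \<partial>\<mu>s)
      \<le> L * enn2real (W1 (emp_measure Ns (fst \<omega>)) (emp_measure Nt (snd \<omega>)))
        + L * (sqrt (2 * ln (1 / \<delta>) / \<kappa>') * (sqrt (1 / Ns) + sqrt (1 / Nt))))"
proof -
  interpret P: prob_space P
    unfolding P_def using ps pt by (intro prob_space_pair prob_space_PiM) auto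
  consider "1 \<le> \<delta>" | "G = {}" | "\<delta> < 1" "G \<noteq> {}" "L = 0" | "\<delta> < 1" "G \<noteq> {}" "L > 0"
    using G_lip lipschitz_on_nonneg by fastforce
  then show ?thesis
  proof cases
    case 1
    then show ?thesis
      by (intro bexI[of _ "{}"]) auto
  next
    case 2
    then show ?thesis
      using \<delta> by (intro bexI[of _ "space P"]) (auto simp: P.prob_space)
  next
    case 3
    have "g x = g 0" if "g \<in> G" for g x
      using lipschitz_onD[OF G_lip[OF that], of x 0] 3 by simp
    then have "(\<integral>x. g x \<partial>\<mu>) = g 0" if "g \<in> G" "prob_space \<mu>" for g \<mu>
      using that by (simp add: Bochner_Integration.integral_cong[of \<mu> \<mu> g "\<lambda>_. g 0"] prob_space.prob_space)
    then have "(\<integral>x. g x \<partial>\<mu>t) - (\<integral>x. g x \<partial>\<mu>s) = 0" if "g \<in> G" for g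
      using that ps pt by simp
    then show ?thesis
      using \<delta> 3 by (intro bexI[of _ "space P"]) (auto simp: P.prob_space)
  next
    case 4
    then show ?thesis
      unfolding P_def using G_lip G_bnd Ns Nt \<delta>
      by (intro T1_ineq_uniform_discrepancy_bound_nondegenerate[OF ps sets_\<mu>s T1s pt sets_\<mu>t T1t \<kappa>']) auto
  qed
qed

lemma eps_commute: "eps M h g = eps M g h"
  by (simp add: eps_def abs_minus_commute)

lemma eps_triangle:
  assumes "integrable M h" "integrable M g" "integrable M f"
  shows "eps M h f \<le> eps M h g + eps M g f"
proof -
  have "(\<integral>x. \<bar>h x - f x\<bar> \<partial>M) \<le> (\<integral>x. \<bar>h x - g x\<bar> + \<bar>g x - f x\<bar> \<partial>M)"
    using assms by (intro integral_mono) auto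
  then show ?thesis
    using assms by (simp add: eps_def)
qed

lemma eps_target_le_source_plus_discrepancy:
  assumes "integrable \<mu>s h" "integrable \<mu>s h'" "integrable \<mu>s f"
    and "integrable \<mu>t h" "integrable \<mu>t h'" "integrable \<mu>t f"
  shows "eps \<mu>t h f \<le> eps \<mu>s h f + (eps \<mu>s h' f + eps \<mu>t h' f) + (eps \<mu>t h h' - eps \<mu>s h h')"
  using eps_triangle[of \<mu>t h h' f] eps_triangle[of \<mu>s h f h'] eps_commute[of \<mu>s f h'] assms
  by simp

lemma domain_adaptation_bound:
  fixes f :: "'a::real_normed_vector \<Rightarrow> real" and Ns Nt :: nat
  assumes f_range: "\<And>x. 0 \<le> f x \<and> f x \<le> 1" and f_meas: "f \<in> borel_measurable borel"
    and H_range: "\<And>h x. h \<in> H \<Longrightarrow> 0 \<le> h x \<and> h x \<le> 1"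
    and H_lip: "\<And>h. h \<in> H \<Longrightarrow> K-lipschitz_on UNIV h"
    and ps: "prob_space \<mu>s" "sets \<mu>s = sets borel" and pt: "prob_space \<mu>t" "sets \<mu>t = sets borel"
    and T1s: "T1_ineq \<kappa> \<mu>s" and T1t: "T1_ineq \<kappa> \<mu>t" and hstar_in: "hstar \<in> H"
    and \<kappa>': "0 < \<kappa>'" "\<kappa>' < \<kappa>" and \<delta>: "0 < \<delta>" and Ns: "0 < Ns" and Nt: "0 < Nt"
  shows "let P = (PiM {..<Ns} (\<lambda>_. \<mu>s)) \<Otimes>\<^sub>M (PiM {..<Nt} (\<lambda>_. \<mu>t)) in
    \<exists>A \<in> sets P. measure P A \<ge> 1 - \<delta> \<and>
      (\<forall>\<omega> \<in> A. \<forall>h \<in> H.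
         eps \<mu>t h f \<le> eps \<mu>s h f
           + 2 * K * enn2real (W1 (emp_measure Ns (fst \<omega>)) (emp_measure Nt (snd \<omega>)))
           + (eps \<mu>s hstar f + eps \<mu>t hstar f)
           + 2 * K * sqrt (2 * ln (1 / \<delta>) / \<kappa>') * (sqrt (1 / real Ns) + sqrt (1 / real Nt)))"
proof -
  define G where "G = (\<lambda>h x. \<bar>h x - hstar x\<bar>) ` H"
  have "(2 * K)-lipschitz_on UNIV g" if "g \<in> G" for g
    using that H_lip[OF hstar_in] H_lip
    by (auto simp: G_def intro!: lipschitz_on_abs lipschitz_on_diff[where C=K and D=K, simplified])
  moreover have "\<bar>g x\<bar> \<le> 1" if "g \<in> G" for g x
    using that H_range[OF hstar_in, of x] by (auto simp: G_def abs_le_iff dest!: H_range[where x=x])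
  ultimately obtain A where "A \<in> sets ((PiM {..<Ns} (\<lambda>_. \<mu>s)) \<Otimes>\<^sub>M (PiM {..<Nt} (\<lambda>_. \<mu>t)))"
    "1 - \<delta> \<le> measure ((PiM {..<Ns} (\<lambda>_. \<mu>s)) \<Otimes>\<^sub>M (PiM {..<Nt} (\<lambda>_. \<mu>t))) A"
    and A: "\<And>\<omega> g. \<omega> \<in> A \<Longrightarrow> g \<in> G \<Longrightarrow> (\<integral>x. g x \<partial>\<mu>t) - (\<integral>x. g x \<partial>\<mu>s)
      \<le> 2 * K * enn2real (W1 (emp_measure Ns (fst \<omega>)) (emp_measure Nt (snd \<omega>)))
        + 2 * K * (sqrt (2 * ln (1 / \<delta>) / \<kappa>') * (sqrt (1 / Ns) + sqrt (1 / Nt)))"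
    using T1_ineq_uniform_discrepancy_bound[OF ps(1,2) T1s pt(1,2) T1t \<kappa>' _ _ Ns Nt \<delta>, of G]
    by metis
  moreover have "eps \<mu>t h f \<le> eps \<mu>s h f + (eps \<mu>s hstar f + eps \<mu>t hstar f)
      + ((\<integral>x. \<bar>h x - hstar x\<bar> \<partial>\<mu>t) - (\<integral>x. \<bar>h x - hstar x\<bar> \<partial>\<mu>s))" if "h \<in> H" for h
  proof -
    have integrable: "integrable M h" if "h \<in> insert f H" "prob_space M" "sets M = sets borel" for h M
    proof (rule integrable_bounded[OF that(2)])
      show "h \<in> borel_measurable M"
        using that f_meas lipschitz_on_UNIV_borel_measurable[OF H_lip] measurable_cong_sets[OF that(3) refl]
        by auto
      show "\<bar>h x\<bar> \<le> 1" for x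
        using that f_range[of x] H_range[of h x] by auto
    qed
    show ?thesis
      using eps_target_le_source_plus_discrepancy[of \<mu>s h hstar f \<mu>t] integrable ps pt that hstar_in
      by (simp add: eps_def)
  qed
  ultimately show ?thesis
    unfolding Let_def G_def by (fastforce intro!: bexI[of _ A])
qed

theorem theorem3:
  fixes f :: "'a::euclidean_space \<Rightarrow> real"
    and H :: "('a \<Rightarrow> real) set"
    and K \<kappa> lam :: real
    and \<mu>s \<mu>t :: "'a measure"
    and hstar :: "'a \<Rightarrow> real"
  assumes f_range: "\<And>x. 0 \<le> f x \<and> f x \<le> 1"
    and f_meas: "f \<in> borel_measurable borel"
    and H_range: "\<And>h x. h \<in> H \<Longrightarrow> 0 \<le> h x \<and> h x \<le> 1"
    and H_lip: "\<And>h. h \<in> H \<Longrightarrow> K-lipschitz_on UNIV h"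
    and ps: "prob_space \<mu>s" "sets \<mu>s = sets borel"
    and pt: "prob_space \<mu>t" "sets \<mu>t = sets borel"
    and T1s: "T1_ineq \<kappa> \<mu>s"
    and T1t: "T1_ineq \<kappa> \<mu>t"
    and hstar_in: "hstar \<in> H"
    and hstar_min: "\<And>h. h \<in> H \<Longrightarrow> eps \<mu>s hstar f + eps \<mu>t hstar f \<le> eps \<mu>s h f + eps \<mu>t h f"
    and lam_def: "lam = eps \<mu>s hstar f + eps \<mu>t hstar f"
  shows "\<forall>d' \<kappa>'. real DIM('a) < d' \<and> 0 < \<kappa>' \<and> \<kappa>' < \<kappa> \<longrightarrow>
    (\<exists>N0::real. \<forall>\<delta>::real. \<forall>Ns Nt::nat. 0 < \<delta> \<and>
        real (min Ns Nt) \<ge> N0 * max (\<delta> powr (-(d' + 2))) 1 \<longrightarrow>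
      (let P = (PiM {..<Ns} (\<lambda>_. \<mu>s)) \<Otimes>\<^sub>M (PiM {..<Nt} (\<lambda>_. \<mu>t)) in
        \<exists>A \<in> sets P. measure P A \<ge> 1 - \<delta> \<and>
          (\<forall>\<omega> \<in> A. \<forall>h \<in> H.
             eps \<mu>t h f \<le> eps \<mu>s h f
               + 2 * K * enn2real (W1 (emp_measure Ns (fst \<omega>)) (emp_measure Nt (snd \<omega>)))
               + lam
               + 2 * K * sqrt (2 * ln (1 / \<delta>) / \<kappa>') * (sqrt (1 / real Ns) + sqrt (1 / real Nt)))))"
  unfolding lam_def
  by (intro allI impI exI[of _ 1])
    (auto simp: max_def split: if_splits intro!: domain_adaptation_bound assms)

end
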